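(* Let $v\ge 2$ and $1\le s<t\le k$ be integers such that every prime divisor of $v$ is at least $k$. Then there exists an AOA$(s,t,k,v)$.
   Context: An orthogonal array OA$(t,k,v)$ (with $1\le t\le k$) is a $v^t\times k$ array with entries from a set $X$ of size $v$ such that, for every choice of $t$ of its columns, each $t$-tuple in $X^t$ appears exactly once as a row of the corresponding $v^t\times t$ subarray. For integers $1\le s\le t\le k$, an augmented orthogonal array AOA$(s,t,k,v)$ is a $v^t\times(k+1)$ array $A$ such that: (1) the first $k$ columns of $A$ form an OA$(t,k,v)$ on a symbol set $X$ of size $v$; (2) the last column of $A$ has entries from a set $Y$ of size $v^{t-s}$; (3) for any choice of $s$ of the first $k$ columns, these $s$ columns together with the last column contain every $(s+1)$-tuple of $X^s\times Y$ exactly once as a row. *)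

theory Defs
  imports Main "HOL-Library.FuncSet" "HOL-Computational_Algebra.Primes"
begin

text \<open>An array with R rows and c columns is a function A :: nat => nat => 'a,
  where A i j is the entry in row i < R and column j < c.\<close>

definition is_OA :: "nat \<Rightarrow> nat \<Rightarrow> nat \<Rightarrow> 'a set \<Rightarrow> (nat \<Rightarrow> nat \<Rightarrow> 'a) \<Rightarrow> bool" where
  "is_OA t k v X A \<longleftrightarrow>
     1 \<le> t \<and> t \<le> k \<and> finite X \<and> card X = v \<and>
     (\<forall>i < v ^ t. \<forall>j < k. A i j \<in> X) \<and>
     (\<forall>S. S \<subseteq> {..<k} \<and> card S = t \<longrightarrow>
        bij_betw (\<lambda>i. restrict (A i) S) {..<v ^ t} (S \<rightarrow>\<^sub>E X))"

definition is_AOA :: "nat \<Rightarrow> nat \<Rightarrow> nat \<Rightarrow> nat \<Rightarrow> 'a set \<Rightarrow> 'a set \<Rightarrow> (nat \<Rightarrow> nat \<Rightarrow> 'a) \<Rightarrow> bool" where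
  "is_AOA s t k v X Y A \<longleftrightarrow>
     1 \<le> s \<and> s \<le> t \<and>
     is_OA t k v X A \<and>
     finite Y \<and> card Y = v ^ (t - s) \<and>
     (\<forall>i < v ^ t. A i k \<in> Y) \<and>
     (\<forall>S. S \<subseteq> {..<k} \<and> card S = s \<longrightarrow>
        bij_betw (\<lambda>i. (restrict (A i) S, A i k)) {..<v ^ t} ((S \<rightarrow>\<^sub>E X) \<times> Y))"

end

theory Submission
  imports Defs "HOL-Computational_Algebra.Polynomial"
begin

text \<open>Identify row \<open>n < v^t\<close> with the integer polynomial \<open>f\<^sub>n\<close> whose coefficients are the
  \<open>t\<close> base-\<open>v\<close> digits of \<open>n\<close>; column \<open>c < k\<close> holds \<open>f\<^sub>n(c) mod v\<close> and the last column the
  high digits \<open>n div v^s\<close>. If two rows agree on a set \<open>S\<close> of columns, their difference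
  vanishes modulo \<open>v\<close> at the points of \<open>S\<close>, whose pairwise differences are below \<open>k\<close> and hence
  units modulo \<open>v\<close>. Dividing out the linear factors one point at a time shows that a
  polynomial of degree below \<open>|S|\<close> with this property has all coefficients divisible by \<open>v\<close>.
  For \<open>|S| = t\<close> this makes the rows distinct on every \<open>t\<close> columns; for \<open>|S| = s\<close> the last column
  supplies the digits of degree \<open>\<ge> s\<close>. Counting turns injectivity into bijectivity.\<close>

lemma dvd_coeff_if_dvd_poly_on:
  fixes p :: "'a :: ring_gcd poly"
  assumes "finite A" and "\<forall>i \<ge> card A. coeff p i = 0"
    and "pairwise (\<lambda>a b. coprime (a - b) v) A" and "\<forall>x\<in>A. v dvd poly p x"
  shows "v dvd coeff p i"
  using assms
proof (induction A arbitrary: p i rule: finite_induct)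
  case empty
  then show ?case by simp
next
  case (insert a A)
  define q where "q = synthetic_div p a"
  have p_eq: "p = [:-a, 1:] * q + [:poly p a:]"
    unfolding q_def by (rule synthetic_div_correct'[symmetric])
  have "degree p \<le> card A"
    using insert.prems(1) insert.hyps by (intro degree_le) (auto simp: Suc_le_eq)
  then have "\<forall>i \<ge> card A. coeff q i = 0"
  proof (cases "degree p = 0")
    case True
    then show ?thesis by (simp add: q_def synthetic_div_eq_0_iff[THEN iffD2])
  next
    case False
    with \<open>degree p \<le> card A\<close> show ?thesis
      by (auto simp: q_def degree_synthetic_div intro!: coeff_eq_0)
  qed
  moreover have "\<forall>x\<in>A. v dvd poly q x"
  proof
    fix x assume x: "x \<in> A"
    have "poly p x = (x - a) * poly q x + poly p a"
      by (subst p_eq) (simp add: algebra_simps)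
    then have "v dvd (x - a) * poly q x"
      using insert.prems(3) x by (metis add_diff_cancel dvd_diff insertCI)
    moreover have "coprime (x - a) v"
      using insert.prems(2) insert.hyps(2) x by (metis insertCI pairwise_def)
    ultimately show "v dvd poly q x"
      by (metis coprime_commute coprime_dvd_mult_right_iff)
  qed
  moreover have "pairwise (\<lambda>a b. coprime (a - b) v) A"
    using insert.prems(2) by (auto intro: pairwise_subset)
  ultimately have q_dvd: "v dvd coeff q j" for j
    using insert.IH by blast
  have p_eq': "p = smult (-a) q + pCons 0 q + [:poly p a:]"
    by (subst p_eq) (simp add: mult_pCons_left)
  show ?case
    using q_dvd[of i] q_dvd[of "i - 1"] insert.prems(3)
    by (subst p_eq') (cases i, simp_all)
qed

lemma coprime_diff_if_prime_factors_ge: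
  fixes a b k v :: nat
  assumes "a < k" "b < k" "a \<noteq> b" and "\<forall>p. prime p \<and> p dvd v \<longrightarrow> p \<ge> k"
  shows "coprime (int a - int b) (int v)"
proof -
  define d where "d = nat \<bar>int a - int b\<bar>"
  have d: "0 < d" "d < k"
    using assms(1-3) unfolding d_def by auto
  have "coprime d v"
  proof (rule ccontr)
    assume "\<not> coprime d v"
    then have "gcd d v \<noteq> 1"
      by (simp add: coprime_iff_gcd_eq_1)
    then obtain p where p: "prime p" "p dvd gcd d v"
      using prime_factor_nat by blast
    then have "p dvd d" "p dvd v"
      using dvd_trans gcd_dvd1 gcd_dvd2 by blast+
    then have "p \<le> d"
      using d(1) by (simp add: dvd_imp_le)
    moreover have "k \<le> p"
      using assms(4) p(1) \<open>p dvd v\<close> by blast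
    ultimately show False
      using d(2) by simp
  qed
  then show ?thesis
    by (simp add: d_def flip: coprime_int_iff)
qed

definition digit :: "nat \<Rightarrow> nat \<Rightarrow> nat \<Rightarrow> nat" where
  "digit v n j = n div v ^ j mod v"

lemma eq_if_digits_eq:
  assumes "n < v ^ t" "m < v ^ t" "\<forall>j<t. digit v n j = digit v m j"
  shows "n = m"
  using assms
proof (induction t arbitrary: n m)
  case 0
  then show ?case by simp
next
  case (Suc t)
  have "n div v < v ^ t" "m div v < v ^ t"
    using Suc.prems(1,2) by (auto simp: less_mult_imp_div_less mult.commute)
  moreover have "\<forall>j<t. digit v (n div v) j = digit v (m div v) j"
    using Suc.prems(3) by (auto simp: digit_def div_mult2_eq[symmetric])
  ultimately have "n div v = m div v"
    using Suc.IH by blast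
  moreover have "n mod v = m mod v"
    using Suc.prems(3)[rule_format, of 0] by (simp add: digit_def)
  ultimately show ?case
    by (metis div_mult_mod_eq)
qed

lemma digit_eq_if_div_eq:
  assumes "n div v ^ s = m div v ^ s" "s \<le> j"
  shows "digit v n j = digit v m j"
proof -
  have "v ^ j = v ^ s * v ^ (j - s)"
    using assms(2) by (simp flip: power_add)
  with assms(1) show ?thesis
    by (simp add: digit_def div_mult2_eq)
qed

definition digit_poly :: "nat \<Rightarrow> nat \<Rightarrow> nat \<Rightarrow> int poly" where
  "digit_poly v t n = (\<Sum>j<t. monom (int (digit v n j)) j)"

lemma coeff_digit_poly: "coeff (digit_poly v t n) j = (if j < t then int (digit v n j) else 0)"
  by (simp add: digit_poly_def coeff_sum)

lemma eq_if_digit_polys_cong_on: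
  fixes v k t n m :: nat
  assumes v: "v > 0" and prime_factors: "\<forall>p. prime p \<and> p dvd v \<longrightarrow> p \<ge> k"
    and S: "S \<subseteq> {..<k}" and nm: "n < v ^ t" "m < v ^ t"
    and cong: "\<forall>c\<in>S. poly (digit_poly v t n) (int c) mod v = poly (digit_poly v t m) (int c) mod v"
    and high: "\<forall>j \<ge> card S. digit v n j = digit v m j"
  shows "n = m"
proof -
  define p where "p = digit_poly v t n - digit_poly v t m"
  have "finite S"
    using S finite_subset by blast
  have "\<forall>i \<ge> card (int ` S). coeff p i = 0"
    using high by (simp add: p_def coeff_digit_poly card_image)
  moreover have "pairwise (\<lambda>a b. coprime (a - b) (int v)) (int ` S)"
    using S coprime_diff_if_prime_factors_ge[OF _ _ _ prime_factors]
    by (auto simp: pairwise_def)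
  moreover have "\<forall>x\<in>int ` S. int v dvd poly p x"
    using cong by (auto simp: p_def mod_eq_dvd_iff)
  ultimately have dvd: "int v dvd coeff p j" for j
    using dvd_coeff_if_dvd_poly_on \<open>finite S\<close> by blast
  have "digit v n j = digit v m j" if "j < t" for j
  proof -
    have "int v dvd int (digit v n j) - int (digit v m j)"
      using dvd[of j] that by (simp add: p_def coeff_digit_poly)
    moreover have "digit v n j < v" "digit v m j < v"
      using v by (simp_all add: digit_def)
    ultimately show ?thesis
      using dvd_imp_le_int[of "int (digit v n j) - int (digit v m j)" "int v"] by fastforce
  qed
  then show ?thesis
    using eq_if_digits_eq nm by blast
qed

lemma bij_betw_if_inj_on_card_eq:
  assumes "inj_on f A" "f ` A \<subseteq> B" "finite B" "card A = card B"
  shows "bij_betw f A B"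
  using assms card_image card_subset_eq unfolding bij_betw_def by metis

definition aoa_array :: "nat \<Rightarrow> nat \<Rightarrow> nat \<Rightarrow> nat \<Rightarrow> nat \<Rightarrow> nat \<Rightarrow> nat" where
  "aoa_array v t s k n c =
     (if c < k then nat (poly (digit_poly v t n) (int c) mod int v) else n div v ^ s)"

lemma aoa_array_lt:
  "v > 0 \<Longrightarrow> c < k \<Longrightarrow> aoa_array v t s k n c < v"
  by (simp add: aoa_array_def nat_less_iff)

lemma aoa_array_last_lt:
  "n < v ^ t \<Longrightarrow> s \<le> t \<Longrightarrow> aoa_array v t s k n k < v ^ (t - s)"
  by (simp add: aoa_array_def less_mult_imp_div_less mult.commute flip: power_add)

lemma aoa_array_eq_iff:
  "v > 0 \<Longrightarrow> c < k \<Longrightarrow> aoa_array v t s k n c = aoa_array v t s k m c \<longleftrightarrow>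
     poly (digit_poly v t n) (int c) mod v = poly (digit_poly v t m) (int c) mod v"
  by (simp add: aoa_array_def eq_nat_nat_iff pos_mod_sign)

lemma eq_if_aoa_array_eq_on:
  assumes v: "v > 0" and prime_factors: "\<forall>p. prime p \<and> p dvd v \<longrightarrow> p \<ge> k"
    and "S \<subseteq> {..<k}" "n < v ^ t" "m < v ^ t"
    and "\<forall>c\<in>S. aoa_array v t s k n c = aoa_array v t s k m c"
    and "\<forall>j \<ge> card S. digit v n j = digit v m j"
  shows "n = m"
proof (rule eq_if_digit_polys_cong_on[OF v prime_factors])
  show "\<forall>c\<in>S. poly (digit_poly v t n) (int c) mod v = poly (digit_poly v t m) (int c) mod v"
    using assms(3,6) aoa_array_eq_iff[OF v] by blast
qed (use assms in auto)

lemma is_OA_aoa_array: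
  assumes v: "v > 0" and "1 \<le> t" "t \<le> k"
    and prime_factors: "\<forall>p. prime p \<and> p dvd v \<longrightarrow> p \<ge> k"
  shows "is_OA t k v {..<v} (aoa_array v t s k)"
  unfolding is_OA_def
proof (intro conjI allI impI)
  fix S assume S: "S \<subseteq> {..<k} \<and> card S = t"
  then have "finite S"
    using finite_subset by blast
  show "bij_betw (\<lambda>n. restrict (aoa_array v t s k n) S) {..<v ^ t} (S \<rightarrow>\<^sub>E {..<v})"
  proof (rule bij_betw_if_inj_on_card_eq)
    show "inj_on (\<lambda>n. restrict (aoa_array v t s k n) S) {..<v ^ t}"
    proof (rule inj_onI)
      fix n m assume nm: "n \<in> {..<v ^ t}" "m \<in> {..<v ^ t}"
        and eq: "restrict (aoa_array v t s k n) S = restrict (aoa_array v t s k m) S"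
      have "n div v ^ t = m div v ^ t"
        using nm by simp
      then have "\<forall>j \<ge> card S. digit v n j = digit v m j"
        using S by (auto intro: digit_eq_if_div_eq)
      moreover have "\<forall>c\<in>S. aoa_array v t s k n c = aoa_array v t s k m c"
        using eq by (metis restrict_apply')
      ultimately show "n = m"
        using eq_if_aoa_array_eq_on[OF v prime_factors] S nm by blast
    qed
  qed (use S \<open>finite S\<close> aoa_array_lt[OF v] in \<open>auto simp: card_PiE finite_PiE\<close>)
qed (use assms aoa_array_lt in auto)

lemma aoa_array_augmented_bij:
  assumes v: "v > 0" and "s \<le> t"
    and prime_factors: "\<forall>p. prime p \<and> p dvd v \<longrightarrow> p \<ge> k"
    and S: "S \<subseteq> {..<k}" "card S = s"
  shows "bij_betw (\<lambda>n. (restrict (aoa_array v t s k n) S, aoa_array v t s k n k))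
           {..<v ^ t} ((S \<rightarrow>\<^sub>E {..<v}) \<times> {..<v ^ (t - s)})"
proof (rule bij_betw_if_inj_on_card_eq)
  have "finite S"
    using S finite_subset by blast
  show "inj_on (\<lambda>n. (restrict (aoa_array v t s k n) S, aoa_array v t s k n k)) {..<v ^ t}"
  proof (rule inj_onI)
    fix n m assume nm: "n \<in> {..<v ^ t}" "m \<in> {..<v ^ t}"
      and eq: "(restrict (aoa_array v t s k n) S, aoa_array v t s k n k) =
               (restrict (aoa_array v t s k m) S, aoa_array v t s k m k)"
    then have "\<forall>c\<in>S. aoa_array v t s k n c = aoa_array v t s k m c"
      by (metis prod.inject restrict_apply')
    moreover have "\<forall>j \<ge> card S. digit v n j = digit v m j"
      using eq S by (auto simp: aoa_array_def intro: digit_eq_if_div_eq)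
    ultimately show "n = m"
      using eq_if_aoa_array_eq_on[OF v prime_factors] S nm by blast
  qed
  show "(\<lambda>n. (restrict (aoa_array v t s k n) S, aoa_array v t s k n k)) ` {..<v ^ t}
          \<subseteq> (S \<rightarrow>\<^sub>E {..<v}) \<times> {..<v ^ (t - s)}"
    using S aoa_array_lt[OF v] aoa_array_last_lt[OF _ \<open>s \<le> t\<close>] by auto
  show "finite ((S \<rightarrow>\<^sub>E {..<v}) \<times> {..<v ^ (t - s)})"
    using \<open>finite S\<close> by (simp add: finite_PiE)
  show "card {..<v ^ t} = card ((S \<rightarrow>\<^sub>E {..<v}) \<times> {..<v ^ (t - s)})"
    using \<open>finite S\<close> S \<open>s \<le> t\<close> by (simp add: card_PiE card_cartesian_product flip: power_add)
qed

theorem theorem2p2: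
  fixes v s t k :: nat
  assumes "v \<ge> 2" and "1 \<le> s" and "s < t" and "t \<le> k"
    and "\<forall>p. prime p \<and> p dvd v \<longrightarrow> p \<ge> k"
  shows "\<exists>(X :: nat set) (Y :: nat set) (A :: nat \<Rightarrow> nat \<Rightarrow> nat). is_AOA s t k v X Y A"
proof -
  have "v > 0" "s \<le> t" "1 \<le> t"
    using assms(1-3) by auto
  then have "is_AOA s t k v {..<v} {..<v ^ (t - s)} (aoa_array v t s k)"
    using assms(2,4,5) is_OA_aoa_array aoa_array_last_lt aoa_array_augmented_bij
    unfolding is_AOA_def by auto
  then show ?thesis
    by blast
qed

end
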